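(* Let $\nu>-1$ be real. Then every zero $a\in\mathbb C\setminus\{0\}$ of $x\mapsto J_\nu(x;q^2)$ is real.
   Context: Fix $0<q<1$. For $a\in\mathbb C$ put $(a;q)_0=1$, $(a;q)_k=\prod_{i=0}^{k-1}(1-aq^i)$, $(a;q)_\infty=\prod_{i\ge0}(1-aq^i)$. For $\nu\in\mathbb C$ and $x\in\mathbb C\setminus\{0\}$ the Hahn–Exton $q$-Bessel function is $$J_\nu(x;q^2)=\frac{x^\nu}{(q^2;q^2)_\infty}\sum_{k=0}^\infty\frac{(-1)^kq^{k(k+1)}(q^{2\nu+2k+2};q^2)_\infty}{(q^2;q^2)_k}\,x^{2k},$$ with $x^\nu=\exp(\nu\operatorname{Log}x)$ (principal branch). Thus the zeros of $J_\nu(\cdot;q^2)$ in $\mathbb C\setminus\{0\}$ are the nonzero zeros of the entire function $x^{-\nu}J_\nu(x;q^2)$. *)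

theory Defs
  imports "HOL-Analysis.Analysis"
begin

definition qpoch :: "complex \<Rightarrow> complex \<Rightarrow> nat \<Rightarrow> complex" where
  "qpoch a p k = (\<Prod>i<k. 1 - a * p ^ i)"

definition qpoch_inf :: "complex \<Rightarrow> complex \<Rightarrow> complex" where
  "qpoch_inf a p = (\<Prod>i. 1 - a * p ^ i)"

text \<open>Hahn--Exton q-Bessel function J_nu(x; q^2), with x^nu on the principal branch
  (complex powr: x powr nu = exp (nu * Ln x) for x nonzero).\<close>
definition hahn_exton_J :: "real \<Rightarrow> complex \<Rightarrow> complex \<Rightarrow> complex" where
  "hahn_exton_J q \<nu> x =
     x powr \<nu> / qpoch_inf (of_real (q\<^sup>2)) (of_real (q\<^sup>2)) *
     (\<Sum>k. (-1) ^ k * of_real (q ^ (k * (k + 1)))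
            * qpoch_inf (of_real q powr (2 * \<nu> + 2 * of_nat k + 2)) (of_real (q\<^sup>2))
            / qpoch (of_real (q\<^sup>2)) (of_real (q\<^sup>2)) k
            * x ^ (2 * k))"

end

theory Submission
  imports Defs
begin

text \<open>
  With Q = q^2 and w = q^(2 nu) one has J_nu(x; q^2) = x^nu / (Q; Q)_inf * f(x^2), where
  f(z) = sum_k c_k z^k has real coefficients with c_(k+1) (1 - Q^(k+1)) (1 - w Q^(k+1)) = - Q^(k+1) c_k;
  hence f solves the q-difference equation f(z) - (1 + w) f(Qz) + w f(Q^2 z) + Qz f(Qz) = 0.
  If f(z) = 0, then u_n = f(Q^n z) and its conjugate f(Q^n cnj z) solve the same three-term recurrence
  with the parameters z and cnj z, and since u_0 = 0 their Casoratian D telescopes to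
  w^N D_N = (z - cnj z) sum_(n<N) Q^(n+1) w^n |u_(n+1)|^2.
  As u_n -> c_0 /= 0 geometrically, D_N = O(Q^N), and since wQ = q^(2 nu + 2) < 1 (this is where
  nu > -1 enters) the left side tends to 0, while the sum on the right is eventually bounded away
  from 0. So z is real. For real z < 0 all terms c_k z^k have the sign of c_0, so z > 0; thus a zero
  x of J_nu has x^2 > 0, i.e. x is real.
\<close>

lemma convergent_prod_qpoch:
  fixes x p :: complex
  assumes "norm p < 1"
  shows "convergent_prod (\<lambda>i. 1 - x * p ^ i)"
proof -
  have "summable (\<lambda>i. norm x * norm p ^ i)"
    using assms by (intro summable_mult summable_geometric) auto
  then have "summable (\<lambda>i. norm ((1 - x * p ^ i) - 1))"
    by (simp add: norm_mult norm_power)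
  then show ?thesis
    by (intro abs_convergent_prod_imp_convergent_prod summable_imp_abs_convergent_prod)
qed

lemma qpoch_factor_nonzero:
  fixes x p :: complex
  assumes "norm x < 1" "norm p \<le> 1"
  shows "1 - x * p ^ i \<noteq> 0"
proof -
  have "norm (x * p ^ i) \<le> norm x"
    using assms by (simp add: norm_mult norm_power mult_left_le power_le_one)
  then have "x * p ^ i \<noteq> 1"
    using assms(1) by auto
  then show ?thesis by simp
qed

lemma qpoch_inf_nonzero:
  fixes x p :: complex
  assumes "norm x < 1" "norm p < 1"
  shows "qpoch_inf x p \<noteq> 0"
  unfolding qpoch_inf_def using assms
  by (intro prodinf_nonzero convergent_prod_qpoch qpoch_factor_nonzero) auto

lemma qpoch_inf_unfold:
  fixes x p :: complex
  assumes "norm p < 1"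
  shows "qpoch_inf x p = (1 - x) * qpoch_inf (x * p) p"
proof -
  have "(\<lambda>i. 1 - x * p ^ i) has_prod ((1 - x) * (\<Prod>i. 1 - x * p ^ Suc i))"
    using has_prod_ignore_initial_segment'[OF convergent_prod_qpoch[OF assms, of x], where n=1] by simp
  then have "qpoch_inf x p = (1 - x) * (\<Prod>i. 1 - x * p ^ Suc i)"
    unfolding qpoch_inf_def by (rule has_prod_unique[symmetric])
  then show ?thesis
    unfolding qpoch_inf_def by (simp add: ac_simps)
qed

lemma qpoch_inf_of_real:
  fixes x p :: real
  assumes "\<bar>p\<bar> < 1"
  shows "qpoch_inf (of_real x) (of_real p) \<in> \<real>"
proof -
  have "(\<lambda>n. \<Prod>i\<le>n. 1 - of_real x * (of_real p :: complex) ^ i)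
      \<longlonglongrightarrow> qpoch_inf (of_real x) (of_real p)"
    unfolding qpoch_inf_def using assms by (intro convergent_prod_LIMSEQ convergent_prod_qpoch) simp
  then show ?thesis
    by (intro Lim_in_closed_set[OF closed_complex_Reals]) auto
qed

lemma qpoch_Suc: "qpoch a p (Suc k) = qpoch a p k * (1 - a * p ^ k)"
  unfolding qpoch_def by simp

lemma qpoch_nonzero:
  assumes "norm a < 1" "norm p \<le> 1"
  shows "qpoch a p k \<noteq> 0"
  unfolding qpoch_def using qpoch_factor_nonzero[OF assms] by simp

definition casoratian :: "(nat \<Rightarrow> 'a::comm_ring) \<Rightarrow> (nat \<Rightarrow> 'a) \<Rightarrow> nat \<Rightarrow> 'a" where
  "casoratian u v n = u n * v (Suc n) - u (Suc n) * v n"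

lemma casoratian_telescope:
  fixes u v :: "nat \<Rightarrow> 'a::comm_ring_1"
  assumes u: "\<And>n. u n - (1 + w) * u (Suc n) + w * u (Suc (Suc n)) + p ^ Suc n * a * u (Suc n) = 0"
    and v: "\<And>n. v n - (1 + w) * v (Suc n) + w * v (Suc (Suc n)) + p ^ Suc n * b * v (Suc n) = 0"
  shows "w ^ N * casoratian u v N
    = casoratian u v 0 + (a - b) * (\<Sum>n<N. p ^ Suc n * w ^ n * u (Suc n) * v (Suc n))"
proof (induction N)
  case 0
  show ?case by simp
next
  case (Suc N)
  have "w * casoratian u v (Suc N) - casoratian u v N - (a - b) * (p ^ Suc N * u (Suc N) * v (Suc N))
      = u (Suc N) * (v N - (1 + w) * v (Suc N) + w * v (Suc (Suc N)) + p ^ Suc N * b * v (Suc N))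
      - v (Suc N) * (u N - (1 + w) * u (Suc N) + w * u (Suc (Suc N)) + p ^ Suc N * a * u (Suc N))"
    unfolding casoratian_def by (simp add: algebra_simps)
  then have "w * casoratian u v (Suc N) - casoratian u v N
      - (a - b) * (p ^ Suc N * u (Suc N) * v (Suc N)) = 0"
    by (simp only: u v mult_zero_right diff_self)
  then have step: "w * casoratian u v (Suc N)
      = casoratian u v N + (a - b) * (p ^ Suc N * u (Suc N) * v (Suc N))"
    by (simp add: algebra_simps)
  have "w ^ Suc N * casoratian u v (Suc N) = w ^ N * (w * casoratian u v (Suc N))"
    by (simp add: mult_ac)
  also have "\<dots> = w ^ N * casoratian u v N + (a - b) * (p ^ Suc N * w ^ N * u (Suc N) * v (Suc N))"
    unfolding step by (simp add: algebra_simps)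
  finally show ?case
    unfolding Suc.IH by (simp add: algebra_simps)
qed

lemma norm_casoratian_le:
  fixes u v :: "nat \<Rightarrow> 'a::real_normed_field"
  assumes Q: "0 \<le> Q" "Q \<le> 1"
    and u: "\<And>n. norm (u n - l) \<le> K * Q ^ n" and v: "\<And>n. norm (v n - l) \<le> K * Q ^ n"
  shows "norm (casoratian u v n) \<le> 2 * K * (K + 2 * norm l) * Q ^ n"
proof -
  define E where "E = K * Q ^ n"
  have "norm (u 0 - l) \<le> K"
    using u[of 0] by simp
  then have "0 \<le> K"
    using norm_ge_zero order_trans by blast
  moreover have "Q ^ Suc n \<le> Q ^ n" "Q ^ n \<le> 1"
    using Q by (simp_all add: mult_left_le_one_le power_le_one)
  ultimately have E: "0 \<le> E" "E \<le> K" "K * Q ^ Suc n \<le> E"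
    using Q unfolding E_def by (simp_all add: mult_left_le mult_left_mono)
  have bounds: "norm (u n - l) \<le> E" "norm (u (Suc n) - l) \<le> E"
      "norm (v n - l) \<le> E" "norm (v (Suc n) - l) \<le> E"
    using u[of n] u[of "Suc n"] v[of n] v[of "Suc n"] E(3) unfolding E_def by linarith+
  have "casoratian u v n = (u n - l) * (v (Suc n) - l) - (u (Suc n) - l) * (v n - l)
      + l * ((u n - l) - (u (Suc n) - l) + (v (Suc n) - l) - (v n - l))"
    unfolding casoratian_def by (simp add: algebra_simps)
  also have "norm \<dots> \<le> E * E + E * E + norm l * (E + E + E + E)"
  proof (intro norm_triangle_le add_mono norm_triangle_le_diff)
    show "norm ((u n - l) * (v (Suc n) - l)) \<le> E * E"
      unfolding norm_mult using bounds E by (intro mult_mono) auto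
    show "norm ((u (Suc n) - l) * (v n - l)) \<le> E * E"
      unfolding norm_mult using bounds E by (intro mult_mono) auto
    have "norm ((u n - l) - (u (Suc n) - l) + (v (Suc n) - l) - (v n - l))
        \<le> norm (u n - l) + norm (u (Suc n) - l) + norm (v (Suc n) - l) + norm (v n - l)"
      by (smt (verit) norm_triangle_ineq norm_triangle_ineq4)
    then have "norm ((u n - l) - (u (Suc n) - l) + (v (Suc n) - l) - (v n - l)) \<le> E + E + E + E"
      using bounds by linarith
    then show "norm (l * ((u n - l) - (u (Suc n) - l) + (v (Suc n) - l) - (v n - l)))
        \<le> norm l * (E + E + E + E)"
      unfolding norm_mult by (intro mult_left_mono) auto
  qed
  also have "\<dots> \<le> 2 * (K * E) + 4 * norm l * E"
    using mult_right_mono[OF E(2,1)] by simp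
  also have "\<dots> = 2 * K * (K + 2 * norm l) * Q ^ n"
    unfolding E_def by (simp add: algebra_simps)
  finally show ?thesis .
qed

locale hahn_exton_series =
  fixes Q w :: real and c :: "nat \<Rightarrow> complex"
  assumes Q_pos: "0 < Q" and Q_less_1: "Q < 1" and w_pos: "0 < w" and wQ_less_1: "w * Q < 1"
    and c0_real: "c 0 \<in> \<real>" and c0_nonzero: "c 0 \<noteq> 0"
    and c_rec: "\<And>k. c (Suc k) * (1 - of_real (Q ^ Suc k)) * (1 - of_real (w * Q ^ Suc k))
                   = - of_real (Q ^ Suc k) * c k"
begin

definition denom :: "nat \<Rightarrow> real" where
  "denom k = (1 - Q ^ Suc k) * (1 - w * Q ^ Suc k)"

lemma Q_power_Suc_le: "Q ^ Suc k \<le> Q"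
  using Q_pos Q_less_1 by (simp add: mult_left_le power_le_one)

lemma denom_ge: "(1 - Q) * (1 - w * Q) \<le> denom k"
  unfolding denom_def
proof (rule mult_mono)
  show "1 - Q \<le> 1 - Q ^ Suc k" "1 - w * Q \<le> 1 - w * Q ^ Suc k"
    using Q_power_Suc_le w_pos by simp_all
  show "0 \<le> 1 - Q ^ Suc k"
    using Q_power_Suc_le[of k] Q_less_1 by simp
  show "0 \<le> 1 - w * Q"
    using wQ_less_1 by simp
qed

lemma denom_pos: "0 < denom k"
  using denom_ge[of k] Q_less_1 wQ_less_1 by (smt (verit) mult_pos_pos)

lemma c_Suc: "c (Suc k) = - of_real (Q ^ Suc k / denom k) * c k"
proof -
  have "c (Suc k) * of_real (denom k) = - of_real (Q ^ Suc k) * c k"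
    using c_rec[of k] unfolding denom_def by (simp add: mult.assoc)
  then show ?thesis
    using denom_pos[of k] by (simp add: field_simps)
qed

lemma c_real: "c k \<in> \<real>"
proof (induction k)
  case (Suc k)
  then show ?case
    unfolding c_Suc by (intro Reals_mult Reals_minus Reals_of_real)
qed (rule c0_real)

lemma summable_norm_c:
  assumes "0 \<le> r"
  shows "summable (\<lambda>k. norm (c k) * r ^ k)"
proof -
  define \<delta> where "\<delta> = (1 - Q) * (1 - w * Q)"
  have "\<delta> > 0"
    unfolding \<delta>_def using Q_less_1 wQ_less_1 by simp
  have "(\<lambda>n. Q ^ n * (Q * r / \<delta>)) \<longlonglongrightarrow> 0 * (Q * r / \<delta>)"
    using Q_pos Q_less_1 by (intro tendsto_mult LIMSEQ_power_zero) auto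
  then have "eventually (\<lambda>n. Q ^ n * (Q * r / \<delta>) < 1/2) sequentially"
    by (intro order_tendstoD) auto
  then obtain N where N: "\<And>n. n \<ge> N \<Longrightarrow> Q ^ n * (Q * r / \<delta>) < 1/2"
    by (auto simp: eventually_sequentially)
  show ?thesis
  proof (rule summable_ratio_test[of "1/2" N])
    fix n
    assume "n \<ge> N"
    have "norm (c (Suc n)) = Q ^ Suc n / denom n * norm (c n)"
      using denom_pos[of n] Q_pos by (simp only: c_Suc norm_mult norm_minus_cancel norm_of_real) simp
    also have "\<dots> \<le> Q ^ Suc n / \<delta> * norm (c n)"
      unfolding \<delta>_def using denom_ge[of n] \<open>\<delta> > 0\<close> Q_pos
      by (intro mult_right_mono divide_left_mono) (auto simp: \<delta>_def)
    finally have "norm (c (Suc n)) * r ^ Suc n \<le> Q ^ Suc n / \<delta> * norm (c n) * r ^ Suc n"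
      using assms by (intro mult_right_mono) auto
    also have "\<dots> = (Q ^ n * (Q * r / \<delta>)) * (norm (c n) * r ^ n)"
      by (simp add: field_simps)
    also have "\<dots> \<le> 1/2 * (norm (c n) * r ^ n)"
      using N[OF \<open>n \<ge> N\<close>] assms by (intro mult_right_mono) auto
    finally show "norm (norm (c (Suc n)) * r ^ Suc n) \<le> 1/2 * norm (norm (c n) * r ^ n)"
      using assms by simp
  qed simp
qed

definition f :: "complex \<Rightarrow> complex" where
  "f z = (\<Sum>k. c k * z ^ k)"

lemma f_sums: "(\<lambda>k. c k * z ^ k) sums f z"
  unfolding f_def
proof (rule summable_sums, rule summable_norm_cancel)
  show "summable (\<lambda>k. norm (c k * z ^ k))"
    using summable_norm_c[of "norm z"] by (simp add: norm_mult norm_power)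
qed

lemma f_cnj: "f (cnj z) = cnj (f z)"
proof -
  have "(\<lambda>k. c k * cnj z ^ k) sums cnj (f z)"
    using sums_cnj[THEN iffD2, OF f_sums[of z]] c_real by (simp add: Reals_cnj_iff)
  then show ?thesis
    using f_sums sums_unique2 by blast
qed

lemma f_qdiff:
  "f z - (1 + of_real w) * f (of_real Q * z) + of_real w * f (of_real Q * (of_real Q * z))
     + of_real Q * z * f (of_real Q * z) = 0"
proof -
  define h where "h k = c k * z ^ k - (1 + of_real w) * (c k * (of_real Q * z) ^ k)
      + of_real w * (c k * (of_real Q * (of_real Q * z)) ^ k)" for k
  have sums_h: "h sums (f z - (1 + of_real w) * f (of_real Q * z)
      + of_real w * f (of_real Q * (of_real Q * z)))"
    unfolding h_def by (intro sums_add sums_diff sums_mult f_sums)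
  have "h (Suc k) = - (of_real Q * z) * (c k * (of_real Q * z) ^ k)" for k
  proof -
    have "h (Suc k)
        = c (Suc k) * (1 - of_real (Q ^ Suc k)) * (1 - of_real (w * Q ^ Suc k)) * z ^ Suc k"
      unfolding h_def by (simp add: power_mult_distrib algebra_simps)
    then show ?thesis
      unfolding c_rec by (simp add: power_mult_distrib algebra_simps)
  qed
  moreover have "h 0 = 0"
    unfolding h_def by (simp add: algebra_simps)
  moreover have "(\<lambda>k. - (of_real Q * z) * (c k * (of_real Q * z) ^ k))
      sums (- (of_real Q * z) * f (of_real Q * z))"
    by (intro sums_mult f_sums)
  ultimately have "h sums (- (of_real Q * z) * f (of_real Q * z))"
    using sums_Suc_iff[of h] by simp
  with sums_h have "f z - (1 + of_real w) * f (of_real Q * z)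
      + of_real w * f (of_real Q * (of_real Q * z)) = - (of_real Q * z) * f (of_real Q * z)"
    by (rule sums_unique2)
  then show ?thesis
    by (simp add: eq_neg_iff_add_eq_0)
qed

lemma f_0: "f 0 = c 0"
  unfolding f_def by (rule powser_zero)

lemma norm_f_minus_c0_le:
  assumes "0 \<le> t" "t \<le> 1"
  shows "norm (f (of_real t * z) - c 0) \<le> t * (\<Sum>k. norm (c k) * norm z ^ k)"
proof -
  have sums: "(\<lambda>k. c k * (of_real t * z) ^ k - (if k = 0 then c k else 0))
      sums (f (of_real t * z) - c 0)"
    by (intro sums_diff f_sums sums_single)
  have le: "norm (c k * (of_real t * z) ^ k - (if k = 0 then c k else 0))
      \<le> t * (norm (c k) * norm z ^ k)" for k
  proof (cases "k = 0")
    case False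
    then have "t ^ k \<le> t"
      using power_decreasing[of 1 k t] assms by simp
    have "norm (c k * (of_real t * z) ^ k) = t ^ k * (norm (c k) * norm z ^ k)"
      using assms by (simp add: norm_mult norm_power power_mult_distrib)
    also have "\<dots> \<le> t * (norm (c k) * norm z ^ k)"
      using \<open>t ^ k \<le> t\<close> by (rule mult_right_mono) simp
    finally show ?thesis
      using False by simp
  qed (use assms in simp)
  have "summable (\<lambda>k. norm (c k) * norm z ^ k)"
    by (intro summable_norm_c) simp
  then have "norm (f (of_real t * z) - c 0) \<le> (\<Sum>k. t * (norm (c k) * norm z ^ k))"
    unfolding sums_unique[OF sums] by (intro norm_suminf_le[OF le] summable_mult)
  also have "\<dots> = t * (\<Sum>k. norm (c k) * norm z ^ k)"
    by (intro suminf_mult summable_norm_c) simp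
  finally show ?thesis .
qed

definition f_orbit :: "complex \<Rightarrow> nat \<Rightarrow> complex" where
  "f_orbit z n = f (of_real (Q ^ n) * z)"

lemma f_orbit_qdiff:
  "f_orbit z n - (1 + of_real w) * f_orbit z (Suc n) + of_real w * f_orbit z (Suc (Suc n))
     + of_real Q ^ Suc n * z * f_orbit z (Suc n) = 0"
  using f_qdiff[of "of_real (Q ^ n) * z"] unfolding f_orbit_def by (simp add: mult_ac)

lemma f_orbit_cnj: "f_orbit (cnj z) n = cnj (f_orbit z n)"
  unfolding f_orbit_def by (simp flip: f_cnj)

lemma norm_f_orbit_minus_c0_le:
  "norm (f_orbit z n - c 0) \<le> (\<Sum>k. norm (c k) * norm z ^ k) * Q ^ n"
  unfolding f_orbit_def using norm_f_minus_c0_le[of "Q ^ n" z] Q_pos Q_less_1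
  by (simp add: power_le_one mult.commute)

lemma f_orbit_tendsto: "f_orbit z \<longlonglongrightarrow> c 0"
proof -
  have "(\<lambda>n. (\<Sum>k. norm (c k) * norm z ^ k) * Q ^ n) \<longlonglongrightarrow> 0"
    using Q_pos Q_less_1 by (intro tendsto_mult_right_zero LIMSEQ_power_zero) auto
  then have "(\<lambda>n. f_orbit z n - c 0) \<longlonglongrightarrow> 0"
    by (rule Lim_null_comparison[OF always_eventually, rotated]) (simp add: norm_f_orbit_minus_c0_le)
  then show ?thesis
    by (rule LIM_zero_cancel)
qed

definition orbit_sum :: "complex \<Rightarrow> nat \<Rightarrow> real" where
  "orbit_sum z N = (\<Sum>n<N. Q ^ Suc n * w ^ n * norm (f_orbit z (Suc n)) ^ 2)"

lemma casoratian_f_orbit_cnj: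
  assumes "f z = 0"
  shows "of_real w ^ N * casoratian (f_orbit z) (f_orbit (cnj z)) N
    = (z - cnj z) * of_real (orbit_sum z N)"
proof -
  have "f_orbit z 0 = 0"
    using assms by (simp add: f_orbit_def)
  then have "casoratian (f_orbit z) (f_orbit (cnj z)) 0 = 0"
    by (simp add: casoratian_def f_orbit_cnj)
  moreover have "of_real Q ^ Suc n * of_real w ^ n * f_orbit z (Suc n) * f_orbit (cnj z) (Suc n)
      = of_real (Q ^ Suc n * w ^ n * norm (f_orbit z (Suc n)) ^ 2)" for n
  proof -
    have "f_orbit z (Suc n) * f_orbit (cnj z) (Suc n) = of_real (norm (f_orbit z (Suc n)) ^ 2)"
      by (simp only: f_orbit_cnj complex_norm_square)
    then show ?thesis
      by (simp add: mult.assoc)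
  qed
  ultimately show ?thesis
    using casoratian_telescope[OF f_orbit_qdiff f_orbit_qdiff, of z N "cnj z"]
    unfolding orbit_sum_def by (simp only: of_real_sum add_0_left)
qed

lemma norm_casoratian_f_orbit_cnj_le:
  obtains C where "\<And>N. norm (casoratian (f_orbit z) (f_orbit (cnj z)) N) \<le> C * Q ^ N"
proof -
  define K where "K = (\<Sum>k. norm (c k) * norm z ^ k)"
  have "f_orbit (cnj z) n - c 0 = cnj (f_orbit z n - c 0)" for n
    using c_real[of 0] by (simp add: f_orbit_cnj Reals_cnj_iff)
  then have "norm (f_orbit (cnj z) n - c 0) = norm (f_orbit z n - c 0)" for n
    by (simp only: complex_mod_cnj)
  then have "norm (casoratian (f_orbit z) (f_orbit (cnj z)) N)
      \<le> 2 * K * (K + 2 * norm (c 0)) * Q ^ N" for N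
    using Q_pos Q_less_1 norm_f_orbit_minus_c0_le[of z] unfolding K_def
    by (intro norm_casoratian_le) auto
  then show ?thesis
    by (rule that)
qed

lemma Im_mult_orbit_sum_le:
  assumes "f z = 0"
  obtains C where "\<And>N. 2 * \<bar>Im z\<bar> * orbit_sum z N \<le> C * (w * Q) ^ N"
proof -
  obtain C where C: "\<And>N. norm (casoratian (f_orbit z) (f_orbit (cnj z)) N) \<le> C * Q ^ N"
    using norm_casoratian_f_orbit_cnj_le[of z] by blast
  have "2 * \<bar>Im z\<bar> * orbit_sum z N \<le> C * (w * Q) ^ N" for N
  proof -
    have "orbit_sum z N \<ge> 0"
      unfolding orbit_sum_def using Q_pos w_pos by (intro sum_nonneg) simp
    then have "2 * \<bar>Im z\<bar> * orbit_sum z N = norm ((z - cnj z) * of_real (orbit_sum z N))"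
      by (simp add: complex_diff_cnj norm_mult)
    also have "\<dots> = w ^ N * norm (casoratian (f_orbit z) (f_orbit (cnj z)) N)"
      using w_pos by (simp add: casoratian_f_orbit_cnj[OF assms, symmetric] norm_mult norm_power)
    also have "\<dots> \<le> C * (w * Q) ^ N"
      using C[of N] w_pos by (simp add: mult_left_mono power_mult_distrib mult_ac)
    finally show ?thesis .
  qed
  then show ?thesis
    by (rule that)
qed

lemma f_zero_imp_real:
  assumes "f z = 0"
  shows "z \<in> \<real>"
proof -
  obtain C where bound: "\<And>N. 2 * \<bar>Im z\<bar> * orbit_sum z N \<le> C * (w * Q) ^ N"
    using Im_mult_orbit_sum_le[OF assms] by blast
  have "eventually (\<lambda>n. f_orbit z n \<noteq> 0) sequentially"
    by (rule tendsto_imp_eventually_ne[OF f_orbit_tendsto c0_nonzero])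
  then obtain m where m: "f_orbit z (Suc m) \<noteq> 0"
    unfolding eventually_sequentially by (meson le_SucI order_refl)
  define t where "t = Q ^ Suc m * w ^ m * norm (f_orbit z (Suc m)) ^ 2"
  have "t > 0"
    unfolding t_def using Q_pos w_pos m by simp
  have "t \<le> orbit_sum z N" if "N \<ge> Suc m" for N
    unfolding orbit_sum_def t_def using that Q_pos w_pos by (intro member_le_sum) auto
  then have "2 * \<bar>Im z\<bar> * t \<le> 2 * \<bar>Im z\<bar> * orbit_sum z N" if "N \<ge> Suc m" for N
    using that by (intro mult_left_mono) auto
  then have "\<forall>N\<ge>Suc m. 2 * \<bar>Im z\<bar> * t \<le> C * (w * Q) ^ N"
    using bound order_trans by blast
  moreover have "(\<lambda>N. C * (w * Q) ^ N) \<longlonglongrightarrow> 0"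
    using Q_pos w_pos wQ_less_1 by (intro tendsto_mult_right_zero LIMSEQ_power_zero) auto
  ultimately have "2 * \<bar>Im z\<bar> * t \<le> 0"
    by (intro LIMSEQ_le_const) auto
  then show ?thesis
    using \<open>t > 0\<close> by (simp add: complex_is_Real_iff mult_le_0_iff)
qed

lemma f_of_real_neg_nonzero:
  assumes "x < 0"
  shows "f (of_real x) \<noteq> 0"
proof -
  have pos: "0 < Re (c k * of_real x ^ k / c 0)" for k
  proof (induction k)
    case (Suc k)
    define \<rho> where "\<rho> = - (Q ^ Suc k / denom k) * x"
    have "0 < Q ^ Suc k / denom k"
      using Q_pos denom_pos[of k] by simp
    then have "Q ^ Suc k / denom k * x < 0"
      using assms by (rule mult_pos_neg)
    then have "0 < \<rho>"
      unfolding \<rho>_def by simp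
    have eq: "c (Suc k) * of_real x ^ Suc k / c 0 = of_real \<rho> * (c k * of_real x ^ k / c 0)"
      unfolding c_Suc \<rho>_def by (simp add: algebra_simps)
    have "Re (c (Suc k) * of_real x ^ Suc k / c 0) = \<rho> * Re (c k * of_real x ^ k / c 0)"
      unfolding eq scaleR_conv_of_real[symmetric] by (simp only: scaleR_complex.sel)
    then show ?case
      using mult_pos_pos[OF \<open>0 < \<rho>\<close> Suc.IH] by simp
  qed (use c0_nonzero in simp)
  have "(\<lambda>k. c k * of_real x ^ k / c 0) sums (f (of_real x) / c 0)"
    by (intro sums_divide f_sums)
  then have "(\<lambda>k. Re (c k * of_real x ^ k / c 0)) sums Re (f (of_real x) / c 0)"
    by (simp add: sums_complex_iff)
  then have "0 < Re (f (of_real x) / c 0)"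
    using suminf_pos[OF sums_summable pos] sums_unique by fastforce
  then show ?thesis
    by auto
qed

lemma f_zero_imp_pos_real:
  assumes "f z = 0"
  obtains x where "x > 0" "z = of_real x"
proof -
  obtain x where x: "z = of_real x"
    using f_zero_imp_real[OF assms] Reals_cases by blast
  have "x \<noteq> 0"
    using assms c0_nonzero f_0 x by auto
  moreover have "\<not> x < 0"
    using assms f_of_real_neg_nonzero x by blast
  ultimately show ?thesis
    using that x by simp
qed

end

definition hahn_exton_coeff :: "real \<Rightarrow> real \<Rightarrow> nat \<Rightarrow> complex" where
  "hahn_exton_coeff q \<nu> k = (-1) ^ k * of_real (q ^ (k * (k + 1)))
     * qpoch_inf (of_real q powr (2 * of_real \<nu> + 2 * of_nat k + 2)) (of_real (q\<^sup>2))
     / qpoch (of_real (q\<^sup>2)) (of_real (q\<^sup>2)) k"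

lemma hahn_exton_J_eq_series:
  "hahn_exton_J q (of_real \<nu>) x = x powr of_real \<nu> / qpoch_inf (of_real (q\<^sup>2)) (of_real (q\<^sup>2))
     * (\<Sum>k. hahn_exton_coeff q \<nu> k * (x\<^sup>2) ^ k)"
  unfolding hahn_exton_J_def hahn_exton_coeff_def by (simp add: power_mult)

lemma hahn_exton_coeff_eq:
  assumes "0 < q"
  shows "hahn_exton_coeff q \<nu> k = (-1) ^ k * of_real (q ^ (k * (k + 1)))
     * qpoch_inf (of_real (q powr (2 * \<nu>) * (q\<^sup>2) ^ Suc k)) (of_real (q\<^sup>2))
     / qpoch (of_real (q\<^sup>2)) (of_real (q\<^sup>2)) k"
proof -
  have "q powr (2 * \<nu> + 2 * real k + 2) = q powr (2 * \<nu>) * q powr real (2 * Suc k)"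
    by (simp add: powr_add[symmetric] algebra_simps)
  also have "\<dots> = q powr (2 * \<nu>) * (q\<^sup>2) ^ Suc k"
    using assms by (simp only: powr_realpow power_mult)
  finally have "of_real q powr (2 * of_real \<nu> + 2 * of_nat k + 2)
      = (of_real (q powr (2 * \<nu>) * (q\<^sup>2) ^ Suc k) :: complex)"
    using assms powr_of_real[of q "2 * \<nu> + 2 * real k + 2"] by simp
  then show ?thesis
    unfolding hahn_exton_coeff_def by simp
qed

lemma hahn_exton_coeff_rec:
  assumes "0 < q" "q < 1"
  shows "hahn_exton_coeff q \<nu> (Suc k) * (1 - of_real ((q\<^sup>2) ^ Suc k))
      * (1 - of_real (q powr (2 * \<nu>) * (q\<^sup>2) ^ Suc k))
    = - of_real ((q\<^sup>2) ^ Suc k) * hahn_exton_coeff q \<nu> k"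
proof -
  define Q where "Q = q\<^sup>2"
  define w where "w = q powr (2 * \<nu>)"
  define s :: complex where "s = of_real (Q ^ Suc k)"
  define r :: complex where "r = of_real (w * Q ^ Suc k)"
  define E :: complex where "E = of_real (q ^ (k * (k + 1)))"
  define P where "P = qpoch (of_real Q) (of_real Q) k"
  define A0 where "A0 = qpoch_inf r (of_real Q)"
  define A1 where "A1 = qpoch_inf (of_real (w * Q ^ Suc (Suc k))) (of_real Q)"
  have Q: "norm (of_real Q :: complex) < 1"
    unfolding Q_def using assms by (simp add: norm_power power_less_one_iff)
  have "1 - s \<noteq> 0"
    using qpoch_factor_nonzero[OF Q, of "of_real Q" k] Q by (simp add: s_def)
  have "P \<noteq> 0"
    unfolding P_def using Q by (intro qpoch_nonzero) auto
  have A0: "A0 = (1 - r) * A1"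
    unfolding A0_def A1_def r_def by (subst qpoch_inf_unfold[OF Q]) (simp add: mult_ac)
  have c: "hahn_exton_coeff q \<nu> k = (-1) ^ k * E * A0 / P"
    by (simp only: hahn_exton_coeff_eq[OF assms(1)] E_def A0_def r_def P_def Q_def w_def)
  have c_Suc: "hahn_exton_coeff q \<nu> (Suc k) = - ((-1) ^ k * (E * s) * A1) / (P * (1 - s))"
  proof -
    have "Suc k * (Suc k + 1) = k * (k + 1) + 2 * Suc k"
      by simp
    then have "q ^ (Suc k * (Suc k + 1)) = q ^ (k * (k + 1)) * Q ^ Suc k"
      unfolding Q_def by (simp only: power_add power_mult)
    moreover have "qpoch (of_real Q) (of_real Q) (Suc k) = P * (1 - s)"
      unfolding P_def s_def qpoch_Suc by simp
    ultimately show ?thesis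
      unfolding hahn_exton_coeff_eq[OF assms(1)] Q_def[symmetric] w_def[symmetric]
      by (simp add: E_def s_def A1_def)
  qed
  show ?thesis
    unfolding Q_def[symmetric] w_def[symmetric] s_def[symmetric] r_def[symmetric] c c_Suc A0
    using \<open>1 - s \<noteq> 0\<close> \<open>P \<noteq> 0\<close> by (simp add: field_simps)
qed

lemma hahn_exton_series_coeff:
  assumes "0 < q" "q < 1" "\<nu> > -1"
  shows "hahn_exton_series (q\<^sup>2) (q powr (2 * \<nu>)) (hahn_exton_coeff q \<nu>)"
proof (unfold_locales)
  show "0 < q\<^sup>2" "q\<^sup>2 < 1" "0 < q powr (2 * \<nu>)"
    using assms by (simp_all add: power_less_one_iff)
  have Q: "norm (of_real (q\<^sup>2) :: complex) < 1"
    using assms by (simp add: norm_power power_less_one_iff)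
  have "q powr (2 * \<nu>) * q\<^sup>2 = q powr (2 * \<nu> + 2)"
    using assms by (simp add: powr_add powr_numeral)
  also have "\<dots> < 1 powr (2 * \<nu> + 2)"
    using assms by (intro powr_less_mono2) auto
  finally show wQ: "q powr (2 * \<nu>) * q\<^sup>2 < 1"
    by simp
  have c0: "hahn_exton_coeff q \<nu> 0
      = qpoch_inf (of_real (q powr (2 * \<nu>) * q\<^sup>2)) (of_real (q\<^sup>2))"
    using hahn_exton_coeff_eq[OF assms(1), of \<nu> 0] by (simp add: qpoch_def)
  show "hahn_exton_coeff q \<nu> 0 \<in> \<real>"
    unfolding c0 using assms by (intro qpoch_inf_of_real) (simp add: power_less_one_iff)
  show "hahn_exton_coeff q \<nu> 0 \<noteq> 0"
    unfolding c0 using Q wQ assms by (intro qpoch_inf_nonzero) (simp_all add: norm_mult norm_power)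
  show "hahn_exton_coeff q \<nu> (Suc k) * (1 - of_real ((q\<^sup>2) ^ Suc k))
      * (1 - of_real (q powr (2 * \<nu>) * (q\<^sup>2) ^ Suc k))
    = - of_real ((q\<^sup>2) ^ Suc k) * hahn_exton_coeff q \<nu> k" for k
    using assms(1,2) by (rule hahn_exton_coeff_rec)
qed

lemma real_if_square_pos_real:
  fixes a :: complex
  assumes "a\<^sup>2 = of_real x" "x > 0"
  shows "a \<in> \<real>"
proof -
  have "Im (a\<^sup>2) = 0" "Re (a\<^sup>2) > 0"
    using assms by simp_all
  then have "Re a * Im a = 0" "Im a * Im a < Re a * Re a"
    by (auto simp: power2_eq_square)
  then show ?thesis
    using not_square_less_zero[of "Im a"] by (auto simp: complex_is_Real_iff)
qed

theorem corollary3p2: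
  fixes q \<nu> :: real and a :: complex
  assumes "0 < q" "q < 1" "\<nu> > -1"
    and "a \<noteq> 0" "hahn_exton_J q (of_real \<nu>) a = 0"
  shows "a \<in> \<real>"
proof -
  interpret hahn_exton_series "q\<^sup>2" "q powr (2 * \<nu>)" "hahn_exton_coeff q \<nu>"
    using assms(1-3) by (rule hahn_exton_series_coeff)
  have "qpoch_inf (of_real (q\<^sup>2)) (of_real (q\<^sup>2)) \<noteq> 0"
    using assms(1,2) by (intro qpoch_inf_nonzero) (simp_all add: norm_power power_less_one_iff)
  then have "f (a\<^sup>2) = 0"
    using assms(4,5) by (simp add: hahn_exton_J_eq_series f_def)
  then obtain x where "x > 0" "a\<^sup>2 = of_real x"
    by (rule f_zero_imp_pos_real)
  then show ?thesis
    by (intro real_if_square_pos_real)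
qed

end
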